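(* For every graph $H$ with $\delta(H)\ge1$, either $str(H)=|V(H)|+\delta(H)$, or $H$ is a proper subgraph of a graph $G$ with $\delta(G)=\delta(H)$ and $str(G)=|V(G)|+\delta(G)$.
   Context: For a graph $G$ of order $p$, a numbering is a bijection $f:V(G)\to[1,p]$; $str_f(G)=\max\{f(u)+f(v): uv\in E(G)\}$ and $str(G)=\min_f str_f(G)$. $\delta(G)$ denotes the minimum degree. *)

theory Defs
  imports Main
begin

definition graph :: "nat set \<Rightarrow> nat set set \<Rightarrow> bool" where
  "graph V E \<longleftrightarrow> finite V \<and> (\<forall>e\<in>E. \<exists>u v. e = {u, v} \<and> u \<in> V \<and> v \<in> V \<and> u \<noteq> v)"

definition degree :: "nat set \<Rightarrow> nat set set \<Rightarrow> nat \<Rightarrow> nat" where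
  "degree V E v = card {u \<in> V. {u, v} \<in> E}"

definition min_degree :: "nat set \<Rightarrow> nat set set \<Rightarrow> nat" where
  "min_degree V E = Min (degree V E ` V)"

definition numbering :: "nat set \<Rightarrow> (nat \<Rightarrow> nat) \<Rightarrow> bool" where
  "numbering V f \<longleftrightarrow> bij_betw f V {1..card V}"

definition str_num :: "nat set set \<Rightarrow> (nat \<Rightarrow> nat) \<Rightarrow> nat" where
  "str_num E f = Max {f u + f v | u v. {u, v} \<in> E}"

definition strength :: "nat set \<Rightarrow> nat set set \<Rightarrow> nat" where
  "strength V E = Min {str_num E f | f. numbering V f}"

definition proper_subgraph :: "nat set \<Rightarrow> nat set set \<Rightarrow> nat set \<Rightarrow> nat set set \<Rightarrow> bool" where
  "proper_subgraph VH EH VG EG \<longleftrightarrow> VH \<subseteq> VG \<and> EH \<subseteq> EG \<and> (VH, EH) \<noteq> (VG, EG)"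

end

theory Submission
  imports Defs
begin

(* In fact the second alternative always holds. Every numbering f of a graph G satisfies
   str_f(G) \<ge> |V(G)| + \<delta>(G), because the vertex numbered |V(G)| has \<delta>(G) neighbours
   with distinct positive numbers, one of which is at least \<delta>(G). Given H with n vertices
   and a numbering f of it, add n new vertices, each joined exactly to the \<delta>(H) vertices
   with f-number at most \<delta>(H). The new vertices have degree \<delta>(H) and old degrees only
   grow, so \<delta>(G) = \<delta>(H); numbering the new vertices n+1, ..., 2n, old edges have sum at
   most 2n and new edges at most 2n + \<delta>(H), so the lower bound is attained. *)

lemma graph_edge_in_vertices:
  assumes "graph V E" and "{u, v} \<in> E"
  shows "u \<in> V" and "v \<in> V"
  using assms unfolding graph_def by (metis doubleton_eq_iff)+

lemma degree_mono:
  assumes "V \<subseteq> V'" and "E \<subseteq> E'" and "finite V'"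
  shows "degree V E v \<le> degree V' E' v"
  unfolding degree_def using assms by (intro card_mono) auto

lemma degree_le_card: "finite V \<Longrightarrow> degree V E v \<le> card V"
  unfolding degree_def by (intro card_mono) auto

lemma min_degree_le_degree: "finite V \<Longrightarrow> v \<in> V \<Longrightarrow> min_degree V E \<le> degree V E v"
  unfolding min_degree_def by simp

lemma min_degree_le_card: "finite V \<Longrightarrow> V \<noteq> {} \<Longrightarrow> min_degree V E \<le> card V"
  using min_degree_le_degree degree_le_card by (meson ex_in_conv le_trans)

lemma numbering_le_card: "numbering V f \<Longrightarrow> v \<in> V \<Longrightarrow> f v \<le> card V"
  unfolding numbering_def bij_betw_def by auto

lemma ex_numbering:
  assumes "finite V"
  shows "\<exists>f. numbering V f"
proof -
  obtain h where "bij_betw h V {0..<card V}"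
    using ex_bij_betw_finite_nat[OF assms] by blast
  moreover have "bij_betw Suc {0..<card V} {1..card V}"
    by (simp add: atLeastLessThanSuc_atLeastAtMost)
  ultimately show ?thesis
    unfolding numbering_def by (blast intro: bij_betw_trans)
qed

lemma numbering_interval: "numbering {M + 1..M + n} (\<lambda>x. x - M)"
proof -
  have "(\<lambda>x. x - M) ` {M + 1..M + n} = {1..n}"
    by (auto simp: image_iff intro!: bexI[where x = "_ + M"])
  then show ?thesis
    unfolding numbering_def by (auto simp: bij_betw_def inj_on_def)
qed

definition concat_numbering :: "nat set \<Rightarrow> (nat \<Rightarrow> nat) \<Rightarrow> (nat \<Rightarrow> nat) \<Rightarrow> nat \<Rightarrow> nat" where
  "concat_numbering V f g x = (if x \<in> V then f x else card V + g x)"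

lemma numbering_concat:
  assumes "numbering V f" and "numbering W g" and "V \<inter> W = {}"
    and "finite V" and "finite W"
  shows "numbering (V \<union> W) (concat_numbering V f g)"
proof -
  have on_V: "bij_betw (concat_numbering V f g) V {1..card V}"
    using assms(1) unfolding numbering_def concat_numbering_def
    by (rule bij_betw_cong[THEN iffD1, rotated]) simp
  have "bij_betw ((+) (card V) \<circ> g) W {card V + 1..card V + card W}"
    using assms(2) unfolding numbering_def
    by (rule bij_betw_trans) (simp add: add.commute)
  moreover have "\<forall>x\<in>W. concat_numbering V f g x = ((+) (card V) \<circ> g) x"
    using assms(3) unfolding concat_numbering_def by auto
  ultimately have "bij_betw (concat_numbering V f g) W {card V + 1..card V + card W}"
    by (metis bij_betw_cong)
  with on_V have "bij_betw (concat_numbering V f g) (V \<union> W) ({1..card V} \<union> {card V + 1..card V + card W})"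
    by (rule bij_betw_combine) auto
  moreover have "{1..card V} \<union> {card V + 1..card V + card W} = {1..card (V \<union> W)}"
    using assms(3-5) by (auto simp: card_Un_disjoint)
  ultimately show ?thesis
    unfolding numbering_def by simp
qed

lemma card_lowest_numbers:
  assumes "numbering V f" and "k \<le> card V"
  shows "card {v \<in> V. f v \<le> k} = k"
proof -
  have "f ` {v \<in> V. f v \<le> k} = {1..k}"
    using assms unfolding numbering_def bij_betw_def by force
  moreover have "inj_on f {v \<in> V. f v \<le> k}"
    using assms(1) unfolding numbering_def bij_betw_def by (auto intro: inj_on_subset)
  ultimately show ?thesis
    by (metis card_atLeastAtMost card_image diff_Suc_1)
qed

section \<open>The lower bound on the strength\<close>

lemma str_num_le:
  assumes "{a, b} \<in> E" and "\<And>u v. {u, v} \<in> E \<Longrightarrow> f u + f v \<le> c"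
  shows "str_num E f \<le> c"
proof -
  have "{f u + f v |u v. {u, v} \<in> E} \<subseteq> {..c}"
    using assms(2) by auto
  then show ?thesis
    unfolding str_num_def using assms(1)
    by (subst Max_le_iff) (auto intro: finite_subset)
qed

lemma le_str_num:
  assumes "graph V E" and "numbering V f" and "{u, v} \<in> E"
  shows "f u + f v \<le> str_num E f"
proof -
  have "f x + f y \<le> 2 * card V" if "{x, y} \<in> E" for x y
    using graph_edge_in_vertices[OF assms(1) that] numbering_le_card[OF assms(2)]
    by (simp add: add_mono mult_2)
  then have "finite {f u + f v |u v. {u, v} \<in> E}"
    by (auto intro: finite_subset[where B = "{..2 * card V}"])
  then show ?thesis
    unfolding str_num_def using assms(3) by (auto intro: Max_ge)
qed

lemma card_le_Max_pos:
  fixes A :: "nat set"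
  assumes "finite A" and "A \<noteq> {}" and "0 \<notin> A"
  shows "card A \<le> Max A"
proof -
  have "A \<subseteq> {1..Max A}"
    using assms by (auto simp: Suc_le_eq)
  then have "card A \<le> card {1..Max A}"
    by (rule card_mono[rotated]) simp
  then show ?thesis
    by simp
qed

lemma ex_neighbour_numbered_ge_min_degree:
  assumes "graph V E" and "numbering V f" and "min_degree V E \<ge> 1" and "v \<in> V"
  obtains u where "{u, v} \<in> E" and "min_degree V E \<le> f u"
proof -
  define N where "N = {u \<in> V. {u, v} \<in> E}"
  have finV: "finite V"
    using assms(1) unfolding graph_def by simp
  then have fin: "finite (f ` N)"
    unfolding N_def by simp
  have deg: "min_degree V E \<le> card N"
    using min_degree_le_degree[OF finV assms(4)] unfolding degree_def N_def .
  then have ne: "f ` N \<noteq> {}"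
    using assms(3) by auto
  have "inj_on f N"
    using assms(2) unfolding numbering_def bij_betw_def N_def by (auto intro: inj_on_subset)
  then have "card N = card (f ` N)"
    by (simp add: card_image)
  also have "\<dots> \<le> Max (f ` N)"
    using assms(2) fin ne unfolding numbering_def bij_betw_def N_def
    by (intro card_le_Max_pos) force+
  finally have "min_degree V E \<le> Max (f ` N)"
    using deg by linarith
  moreover have "Max (f ` N) \<in> f ` N"
    using fin ne by (rule Max_in)
  ultimately obtain u where "u \<in> N" and "min_degree V E \<le> f u"
    by auto
  then show ?thesis
    using that unfolding N_def by blast
qed

lemma ex_vertex_numbered_card:
  assumes "graph V E" and "V \<noteq> {}" and "numbering V f"
  obtains v where "v \<in> V" and "f v = card V"
proof -
  have "card V \<in> {1..card V}"
    using assms(1,2) unfolding graph_def by (simp add: Suc_leI card_gt_0_iff)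
  then show ?thesis
    using assms(3) that unfolding numbering_def bij_betw_def by (metis imageE)
qed

lemma card_plus_min_degree_le_str_num:
  assumes "graph V E" and "V \<noteq> {}" and "numbering V f" and "min_degree V E \<ge> 1"
  shows "card V + min_degree V E \<le> str_num E f"
proof -
  obtain v where v: "v \<in> V" "f v = card V"
    using ex_vertex_numbered_card[OF assms(1-3)] .
  obtain u where edge: "{u, v} \<in> E" and u: "min_degree V E \<le> f u"
    using ex_neighbour_numbered_ge_min_degree[OF assms(1,3,4) v(1)] .
  have "card V + min_degree V E \<le> f u + f v"
    using u v(2) by simp
  also have "\<dots> \<le> str_num E f"
    using le_str_num[OF assms(1,3) edge] .
  finally show ?thesis .
qed

lemma strength_eqI:
  assumes "graph V E" and "V \<noteq> {}" and "min_degree V E \<ge> 1"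
    and "numbering V f" and "str_num E f \<le> card V + min_degree V E"
  shows "strength V E = card V + min_degree V E"
proof -
  let ?A = "{str_num E g |g. numbering V g}"
  obtain v where "v \<in> V"
    using assms(2) by blast
  then obtain u where edge: "{u, v} \<in> E"
    using ex_neighbour_numbered_ge_min_degree[OF assms(1,4,3)] by blast
  have "str_num E g \<le> 2 * card V" if "numbering V g" for g
  proof (rule str_num_le[OF edge])
    fix x y assume "{x, y} \<in> E"
    then have "g x \<le> card V" and "g y \<le> card V"
      using assms(1) that graph_edge_in_vertices numbering_le_card by blast+
    then show "g x + g y \<le> 2 * card V"
      by simp
  qed
  then have "finite ?A"
    by (auto intro: finite_subset[where B = "{..2 * card V}"])
  moreover have "str_num E f = card V + min_degree V E"
    using assms card_plus_min_degree_le_str_num by (simp add: antisym)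
  ultimately show ?thesis
    unfolding strength_def using assms(1-4) card_plus_min_degree_le_str_num
    by (intro Min_eqI) auto
qed

section \<open>Joining new vertices to the lowest-numbered ones\<close>

definition join_edges :: "nat set \<Rightarrow> nat set \<Rightarrow> nat set set" where
  "join_edges W S = {{w, s} |w s. w \<in> W \<and> s \<in> S}"

lemma join_edgesE:
  assumes "{u, v} \<in> join_edges W S"
  obtains "u \<in> W" and "v \<in> S" | "u \<in> S" and "v \<in> W"
proof -
  obtain w s where "{u, v} = {w, s}" and "w \<in> W" and "s \<in> S"
    using assms unfolding join_edges_def by blast
  then show ?thesis
    using that by (auto simp: doubleton_eq_iff)
qed

lemma graph_join:
  assumes "graph V E" and "finite W" and "V \<inter> W = {}" and "S \<subseteq> V"
  shows "graph (V \<union> W) (E \<union> join_edges W S)"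
  unfolding graph_def
proof (intro conjI ballI)
  show "finite (V \<union> W)"
    using assms(1,2) unfolding graph_def by simp
next
  fix e assume "e \<in> E \<union> join_edges W S"
  then show "\<exists>u v. e = {u, v} \<and> u \<in> V \<union> W \<and> v \<in> V \<union> W \<and> u \<noteq> v"
  proof
    assume "e \<in> E"
    then show ?thesis
      using assms(1) unfolding graph_def by blast
  next
    assume "e \<in> join_edges W S"
    then obtain w s where "e = {w, s}" and "w \<in> W" and "s \<in> S"
      unfolding join_edges_def by blast
    then show ?thesis
      using assms(3,4) by blast
  qed
qed

lemma neighbours_join_new_vertex:
  assumes "graph V E" and "V \<inter> W = {}" and "S \<subseteq> V" and "w \<in> W"
  shows "{u \<in> V \<union> W. {u, w} \<in> E \<union> join_edges W S} = S"
proof (intro set_eqI iffI)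
  fix u assume "u \<in> {u \<in> V \<union> W. {u, w} \<in> E \<union> join_edges W S}"
  then have "{u, w} \<in> E \<or> {u, w} \<in> join_edges W S"
    by simp
  moreover have "{u, w} \<notin> E"
    using graph_edge_in_vertices(2)[OF assms(1)] assms(2,4) by blast
  ultimately show "u \<in> S"
    using assms(2-4) by (auto elim: join_edgesE)
next
  fix u assume "u \<in> S"
  then have "{u, w} \<in> join_edges W S"
    using assms(4) unfolding join_edges_def by (auto simp: insert_commute)
  then show "u \<in> {u \<in> V \<union> W. {u, w} \<in> E \<union> join_edges W S}"
    using \<open>u \<in> S\<close> assms(3) by auto
qed

lemma min_degree_join:
  assumes "graph V E" and "finite W" and "W \<noteq> {}" and "V \<inter> W = {}" and "S \<subseteq> V"
    and "card S = min_degree V E"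
  shows "min_degree (V \<union> W) (E \<union> join_edges W S) = min_degree V E"
proof -
  let ?d = "degree (V \<union> W) (E \<union> join_edges W S)"
  have fin: "finite (V \<union> W)"
    using assms(1,2) unfolding graph_def by simp
  have new: "?d w = min_degree V E" if "w \<in> W" for w
    unfolding degree_def using neighbours_join_new_vertex[OF assms(1,4,5) that] assms(6) by simp
  have old: "min_degree V E \<le> ?d v" if "v \<in> V" for v
  proof -
    have "min_degree V E \<le> degree V E v"
      using assms(1) that unfolding graph_def by (simp add: min_degree_le_degree)
    also have "\<dots> \<le> ?d v"
      using fin by (intro degree_mono) auto
    finally show ?thesis .
  qed
  show ?thesis
    unfolding min_degree_def[of "V \<union> W"]
  proof (rule Min_eqI)
    show "finite (?d ` (V \<union> W))"
      using fin by simp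
    show "min_degree V E \<le> y" if "y \<in> ?d ` (V \<union> W)" for y
      using that new old by auto
    obtain w where "w \<in> W"
      using assms(3) by blast
    then show "min_degree V E \<in> ?d ` (V \<union> W)"
      using new[of w] by (auto intro!: image_eqI[where x = w])
  qed
qed

lemma str_num_join_lowest_le:
  assumes "graph V E" and "numbering V f" and "numbering W g" and "V \<inter> W = {}"
    and "finite W" and "card W = card V" and "1 \<le> k" and "k \<le> card V"
  shows "str_num (E \<union> join_edges W {v \<in> V. f v \<le> k}) (concat_numbering V f g)
           \<le> card (V \<union> W) + k"
proof -
  let ?S = "{v \<in> V. f v \<le> k}" and ?h = "concat_numbering V f g"
  have finV: "finite V"
    using assms(1) unfolding graph_def by simp
  have cardVW: "card (V \<union> W) = 2 * card V"
    using finV assms(4-6) by (simp add: card_Un_disjoint)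
  have num: "numbering (V \<union> W) ?h"
    using numbering_concat[OF assms(2-4) finV assms(5)] .
  have "?S \<noteq> {}"
    using card_lowest_numbers[OF assms(2,8)] assms(7) by (metis card.empty not_one_le_zero)
  moreover have "W \<noteq> {}"
    using assms(6-8) by auto
  ultimately obtain w s where "w \<in> W" "s \<in> ?S"
    by blast
  then have edge: "{w, s} \<in> E \<union> join_edges W ?S"
    unfolding join_edges_def by blast
  show ?thesis
  proof (rule str_num_le[OF edge])
    fix u v assume uv: "{u, v} \<in> E \<union> join_edges W ?S"
    have bound: "?h x \<le> 2 * card V" if "x \<in> V \<union> W" for x
      using numbering_le_card[OF num that] cardVW by simp
    have low: "?h x \<le> k" if "x \<in> ?S" for x
      unfolding concat_numbering_def using that by simp
    show "?h u + ?h v \<le> card (V \<union> W) + k"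
    proof (cases "{u, v} \<in> E")
      case True
      then have "?h u \<le> card V" and "?h v \<le> card V"
        using graph_edge_in_vertices[OF assms(1)] numbering_le_card[OF assms(2)]
        unfolding concat_numbering_def by auto
      then show ?thesis
        using cardVW by simp
    next
      case False
      with uv have "{u, v} \<in> join_edges W ?S"
        by simp
      then show ?thesis
        using bound low cardVW by (elim join_edgesE) (fastforce intro: add_mono)+
    qed
  qed
qed

lemma join_lowest_numbered:
  assumes "graph V E" and "V \<noteq> {}" and "min_degree V E \<ge> 1" and "numbering V f"
    and "numbering W g" and "V \<inter> W = {}" and "finite W" and "card W = card V"
  defines "S \<equiv> {v \<in> V. f v \<le> min_degree V E}"
  shows "graph (V \<union> W) (E \<union> join_edges W S)"
    and "min_degree (V \<union> W) (E \<union> join_edges W S) = min_degree V E"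
    and "strength (V \<union> W) (E \<union> join_edges W S) = card (V \<union> W) + min_degree V E"
proof -
  have finV: "finite V"
    using assms(1) unfolding graph_def by simp
  have le_card: "min_degree V E \<le> card V"
    using min_degree_le_card[OF finV assms(2)] .
  have "S \<subseteq> V"
    unfolding S_def by blast
  then show graph: "graph (V \<union> W) (E \<union> join_edges W S)"
    using graph_join[OF assms(1,7,6)] by blast
  have "W \<noteq> {}"
    using assms(2,8) finV by auto
  then show min_deg: "min_degree (V \<union> W) (E \<union> join_edges W S) = min_degree V E"
    using min_degree_join[OF assms(1,7) _ assms(6) \<open>S \<subseteq> V\<close>]
      card_lowest_numbers[OF assms(4) le_card]
    unfolding S_def by blast
  have "str_num (E \<union> join_edges W S) (concat_numbering V f g) \<le> card (V \<union> W) + min_degree V E"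
    unfolding S_def using str_num_join_lowest_le[OF assms(1,4-8,3) le_card] .
  then show "strength (V \<union> W) (E \<union> join_edges W S) = card (V \<union> W) + min_degree V E"
    using strength_eqI[OF graph] numbering_concat[OF assms(4-6) finV assms(7)] min_deg assms(2,3)
    by simp
qed

theorem mainTheorem10:
  fixes VH :: "nat set" and EH :: "nat set set"
  assumes "graph VH EH" and "VH \<noteq> {}" and "min_degree VH EH \<ge> 1"
  shows "strength VH EH = card VH + min_degree VH EH
         \<or> (\<exists>VG EG. graph VG EG \<and> VG \<noteq> {} \<and> proper_subgraph VH EH VG EG
              \<and> min_degree VG EG = min_degree VH EH
              \<and> strength VG EG = card VG + min_degree VG EG)"
proof -
  let ?M = "Max VH"
  let ?W = "{?M + 1..?M + card VH}"
  have finV: "finite VH"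
    using assms(1) unfolding graph_def by simp
  obtain f where f: "numbering VH f"
    using ex_numbering[OF finV] by blast
  have disjoint: "VH \<inter> ?W = {}"
    using finV by (auto simp: Suc_le_eq dest: Max_ge)
  let ?VG = "VH \<union> ?W" and ?EG = "EH \<union> join_edges ?W {v \<in> VH. f v \<le> min_degree VH EH}"
  have "?W \<noteq> {}"
    using finV assms(2) by (simp add: Suc_leI card_gt_0_iff)
  then have "proper_subgraph VH EH ?VG ?EG"
    using disjoint unfolding proper_subgraph_def by blast
  moreover note join_lowest_numbered[OF assms f numbering_interval disjoint]
  moreover have "?VG \<noteq> {}"
    using assms(2) by blast
  ultimately show ?thesis
    by (intro disjI2 exI[of _ ?VG] exI[of _ ?EG]) simp
qed

end
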